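(* Let $I,J$ be infinite sets with $|I|<|J|$. Then $\mathbf{Lat}_I$ does not have 2-fold subobject decompositions over $J$: there exist a family $(L_j)_{j\in J}$ of $I$-complete lattices and two distinct $I$-complete sublattices $S\neq T$ of $\prod_{j\in J}L_j$ whose images under the projection $\prod_{j\in J}L_j\to L_k\times L_l$ coincide for all distinct $k,l\in J$.
   Context: An $I$-complete lattice is a lattice in which every family $(x_i)_{i\in I}$ of elements has a meet and a join; homomorphisms preserve $I$-indexed meets and joins; $\mathbf{Lat}_I$ is the resulting category, with componentwise products and with subobjects the $I$-complete sublattices. A category has 2-fold subobject decompositions over $J$ if for every $J$-indexed family of objects, any two subobjects of their product having the same images in all products $L_k\times L_l$ ($k\neq l$ in $J$) are equal. *)

theory Defs
  imports Main "HOL-Library.FuncSet"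
begin

definition is_inf :: "'a set \<Rightarrow> ('a \<Rightarrow> 'a \<Rightarrow> bool) \<Rightarrow> 'a set \<Rightarrow> 'a \<Rightarrow> bool" where
  "is_inf A le X m \<longleftrightarrow> m \<in> A \<and> (\<forall>x\<in>X. le m x) \<and> (\<forall>y\<in>A. (\<forall>x\<in>X. le y x) \<longrightarrow> le y m)"

definition is_sup :: "'a set \<Rightarrow> ('a \<Rightarrow> 'a \<Rightarrow> bool) \<Rightarrow> 'a set \<Rightarrow> 'a \<Rightarrow> bool" where
  "is_sup A le X m \<longleftrightarrow> m \<in> A \<and> (\<forall>x\<in>X. le x m) \<and> (\<forall>y\<in>A. (\<forall>x\<in>X. le x y) \<longrightarrow> le m y)"

definition lattice_on :: "'a set \<Rightarrow> ('a \<Rightarrow> 'a \<Rightarrow> bool) \<Rightarrow> bool" where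
  "lattice_on A le \<longleftrightarrow> A \<noteq> {} \<and>
     (\<forall>x\<in>A. le x x) \<and>
     (\<forall>x\<in>A. \<forall>y\<in>A. le x y \<and> le y x \<longrightarrow> x = y) \<and>
     (\<forall>x\<in>A. \<forall>y\<in>A. \<forall>z\<in>A. le x y \<and> le y z \<longrightarrow> le x z) \<and>
     (\<forall>x\<in>A. \<forall>y\<in>A. (\<exists>m. is_inf A le {x, y} m) \<and> (\<exists>m. is_sup A le {x, y} m))"

definition I_complete_lattice :: "'i set \<Rightarrow> 'a set \<Rightarrow> ('a \<Rightarrow> 'a \<Rightarrow> bool) \<Rightarrow> bool" where
  "I_complete_lattice I A le \<longleftrightarrow> lattice_on A le \<and>
     (\<forall>x :: 'i \<Rightarrow> 'a. x ` I \<subseteq> A \<longrightarrow>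
        (\<exists>m. is_inf A le (x ` I) m) \<and> (\<exists>m. is_sup A le (x ` I) m))"

definition prod_carrier :: "'j set \<Rightarrow> ('j \<Rightarrow> 'a set) \<Rightarrow> ('j \<Rightarrow> 'a) set" where
  "prod_carrier J C = PiE J C"

definition prod_le :: "'j set \<Rightarrow> ('j \<Rightarrow> 'a \<Rightarrow> 'a \<Rightarrow> bool) \<Rightarrow> ('j \<Rightarrow> 'a) \<Rightarrow> ('j \<Rightarrow> 'a) \<Rightarrow> bool" where
  "prod_le J R f g \<longleftrightarrow> (\<forall>j\<in>J. R j (f j) (g j))"

definition I_complete_sublattice ::
  "'i set \<Rightarrow> 'a set \<Rightarrow> ('a \<Rightarrow> 'a \<Rightarrow> bool) \<Rightarrow> 'a set \<Rightarrow> bool" where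
  "I_complete_sublattice I A le S \<longleftrightarrow> S \<noteq> {} \<and> S \<subseteq> A \<and>
     (\<forall>x\<in>S. \<forall>y\<in>S. \<forall>m. (is_inf A le {x, y} m \<or> is_sup A le {x, y} m) \<longrightarrow> m \<in> S) \<and>
     (\<forall>x :: 'i \<Rightarrow> 'a. x ` I \<subseteq> S \<longrightarrow>
        (\<forall>m. (is_inf A le (x ` I) m \<or> is_sup A le (x ` I) m) \<longrightarrow> m \<in> S))"

end

theory Submission
  imports Defs
begin

text \<open>
  Take every \<open>L\<^sub>j\<close> to be the two-element lattice \<open>{{}, UNIV}\<close>, so that an element of the
  product is determined by its support, the set of coordinates equal to \<open>UNIV\<close>. Meets and joins
  of nonempty families act on supports as intersections and unions, so the elements of support
  size at most \<open>|I|\<close> form an \<open>I\<close>-complete sublattice \<open>T\<close> (an \<open>|I|\<close>-fold union of sets of size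
  at most \<open>|I|\<close> is again that small). Any pair of values at two coordinates is attained by an
  element supported on those two coordinates, so \<open>T\<close> has the same two-dimensional projections
  as the whole product; but \<open>T\<close> misses the top element, whose support \<open>J\<close> is too large.
\<close>

unbundle cardinal_syntax

lemma finite_card_of_ordLeq_infinite: "finite A \<Longrightarrow> infinite B \<Longrightarrow> |A| \<le>o |B|"
  by (intro ordLess_imp_ordLeq finite_ordLess_infinite card_of_Well_order)
    (simp_all add: Field_card_of)

lemma I_complete_sublattice_carrier:
  "A \<noteq> {} \<Longrightarrow> I_complete_sublattice I A le A"
  unfolding I_complete_sublattice_def is_inf_def is_sup_def by blast

lemma I_complete_lattice_two: "I_complete_lattice I {{}, UNIV :: 'a set} (\<subseteq>)"
proof -
  have inf: "\<exists>m. is_inf {{}, UNIV} (\<subseteq>) Y m" and sup: "\<exists>m. is_sup {{}, UNIV} (\<subseteq>) Y m"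
    if Y: "Y \<subseteq> {{}, UNIV :: 'a set}" for Y
  proof -
    have "\<Inter>Y \<in> {{}, UNIV}"
      using Y by (cases "{} \<in> Y") auto
    moreover have "\<Union>Y \<in> {{}, UNIV}"
      using Y by (cases "UNIV \<in> Y") auto
    ultimately
    show "\<exists>m. is_inf {{}, UNIV} (\<subseteq>) Y m" "\<exists>m. is_sup {{}, UNIV} (\<subseteq>) Y m"
      using Y unfolding is_inf_def is_sup_def by blast+
  qed
  show ?thesis
    unfolding I_complete_lattice_def lattice_on_def using inf sup by auto
qed

abbreviation two_pow :: "'j set \<Rightarrow> ('j \<Rightarrow> 'a set) set" where
  "two_pow J \<equiv> PiE J (\<lambda>_. {{}, UNIV})"

abbreviation two_pow_le :: "'j set \<Rightarrow> ('j \<Rightarrow> 'a set) \<Rightarrow> ('j \<Rightarrow> 'a set) \<Rightarrow> bool" where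
  "two_pow_le J \<equiv> prod_le J (\<lambda>_. (\<subseteq>))"

definition support :: "'j set \<Rightarrow> ('j \<Rightarrow> 'a set) \<Rightarrow> 'j set" where
  "support J f = {j\<in>J. f j = UNIV}"

lemma fun_upd_in_two_pow:
  "f \<in> two_pow J \<Longrightarrow> j \<in> J \<Longrightarrow> b \<in> {{}, UNIV} \<Longrightarrow> f(j := b) \<in> two_pow J"
  by (auto simp: PiE_iff extensional_def)

lemma support_is_inf:
  assumes m: "is_inf (two_pow J) (two_pow_le J) X m"
  shows "support J m = J \<inter> (\<Inter>x\<in>X. support J x)"
proof -
  have m_in: "m \<in> two_pow J" and lower: "\<And>x. x \<in> X \<Longrightarrow> two_pow_le J m x"
    and greatest: "\<And>y. y \<in> two_pow J \<Longrightarrow> \<forall>x\<in>X. two_pow_le J y x \<Longrightarrow> two_pow_le J y m"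
    using m unfolding is_inf_def by auto
  have "m j = UNIV \<longleftrightarrow> (\<forall>x\<in>X. x j = UNIV)" if "j \<in> J" for j
  proof
    show "\<forall>x\<in>X. x j = UNIV" if "m j = UNIV"
      using \<open>j \<in> J\<close> that lower by (auto simp: prod_le_def)
  next
    assume "\<forall>x\<in>X. x j = UNIV"
    have "two_pow_le J (m(j := UNIV)) m"
      using \<open>j \<in> J\<close> \<open>\<forall>x\<in>X. x j = UNIV\<close> lower
      by (intro greatest fun_upd_in_two_pow m_in) (auto simp: prod_le_def)
    then have "(m(j := UNIV)) j \<subseteq> m j"
      using \<open>j \<in> J\<close> unfolding prod_le_def by blast
    then show "m j = UNIV" by (simp add: top_le)
  qed
  then have "support J m = {j\<in>J. \<forall>x\<in>X. x j = UNIV}"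
    unfolding support_def by (simp cong: conj_cong)
  also have "\<dots> = J \<inter> (\<Inter>x\<in>X. support J x)"
    unfolding support_def by fast
  finally show ?thesis .
qed

lemma support_is_sup:
  assumes X: "X \<subseteq> two_pow J" and m: "is_sup (two_pow J) (two_pow_le J) X m"
  shows "support J m = (\<Union>x\<in>X. support J x)"
proof -
  have m_in: "m \<in> two_pow J" and upper: "\<And>x. x \<in> X \<Longrightarrow> two_pow_le J x m"
    and least: "\<And>y. y \<in> two_pow J \<Longrightarrow> \<forall>x\<in>X. two_pow_le J x y \<Longrightarrow> two_pow_le J m y"
    using m unfolding is_sup_def by auto
  have "m j = UNIV \<longleftrightarrow> (\<exists>x\<in>X. x j = UNIV)" if "j \<in> J" for j
  proof
    show "m j = UNIV" if "\<exists>x\<in>X. x j = UNIV"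
      using \<open>j \<in> J\<close> that upper by (auto simp: prod_le_def)
  next
    assume "m j = UNIV"
    show "\<exists>x\<in>X. x j = UNIV"
    proof (rule ccontr)
      assume none: "\<not> (\<exists>x\<in>X. x j = UNIV)"
      have "x j = {}" if "x \<in> X" for x
      proof -
        have "x j \<in> {{}, UNIV}"
          using X that \<open>j \<in> J\<close> by (blast intro: PiE_mem)
        then show ?thesis
          using none that by blast
      qed
      then have "two_pow_le J m (m(j := {}))"
        using \<open>j \<in> J\<close> upper by (intro least fun_upd_in_two_pow m_in) (auto simp: prod_le_def)
      then have "m j \<subseteq> (m(j := {})) j"
        using \<open>j \<in> J\<close> unfolding prod_le_def by blast
      then show False
        using \<open>m j = UNIV\<close> by simp
    qed
  qed
  then have "support J m = {j\<in>J. \<exists>x\<in>X. x j = UNIV}"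
    unfolding support_def by (simp cong: conj_cong)
  also have "\<dots> = (\<Union>x\<in>X. support J x)"
    unfolding support_def by auto
  finally show ?thesis .
qed

definition small_support :: "'i set \<Rightarrow> 'j set \<Rightarrow> ('j \<Rightarrow> 'a set) set" where
  "small_support I J = {f \<in> two_pow J. |support J f| \<le>o |I|}"

lemma small_support_subset: "small_support I J \<subseteq> two_pow J"
  by (auto simp: small_support_def)

lemma is_inf_in_small_support:
  assumes X: "X \<subseteq> small_support I J" "X \<noteq> {}" and m: "is_inf (two_pow J) (two_pow_le J) X m"
  shows "m \<in> small_support I J"
proof -
  obtain x where "x \<in> X"
    using X(2) by blast
  then have "support J m \<subseteq> support J x"
    using support_is_inf[OF m] by blast
  moreover have "|support J x| \<le>o |I|"
    using X(1) \<open>x \<in> X\<close> by (auto simp: small_support_def)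
  ultimately have "|support J m| \<le>o |I|"
    using card_of_mono1 ordLeq_transitive by blast
  moreover have "m \<in> two_pow J"
    using m by (simp add: is_inf_def)
  ultimately show ?thesis
    by (simp add: small_support_def)
qed

lemma is_sup_in_small_support:
  assumes "infinite I" and X: "X \<subseteq> small_support I J" "|X| \<le>o |I|"
    and m: "is_sup (two_pow J) (two_pow_le J) X m"
  shows "m \<in> small_support I J"
proof -
  have "support J m = (\<Union>x\<in>X. support J x)"
    using X(1) small_support_subset by (intro support_is_sup[OF _ m]) blast
  moreover have "\<forall>x\<in>X. |support J x| \<le>o |I|"
    using X(1) by (auto simp: small_support_def)
  ultimately have "|support J m| \<le>o |I|"
    using card_of_UNION_ordLeq_infinite \<open>infinite I\<close> X(2) by simp
  moreover have "m \<in> two_pow J"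
    using m by (simp add: is_sup_def)
  ultimately show ?thesis
    by (simp add: small_support_def)
qed

lemma is_inf_or_sup_in_small_support:
  assumes "infinite I" and X: "X \<subseteq> small_support I J" "X \<noteq> {}" "|X| \<le>o |I|"
    and m: "is_inf (two_pow J) (two_pow_le J) X m \<or> is_sup (two_pow J) (two_pow_le J) X m"
  shows "m \<in> small_support I J"
  using m
proof
  assume "is_inf (two_pow J) (two_pow_le J) X m"
  then show ?thesis
    by (rule is_inf_in_small_support[OF X(1,2)])
next
  assume "is_sup (two_pow J) (two_pow_le J) X m"
  then show ?thesis
    by (rule is_sup_in_small_support[OF \<open>infinite I\<close> X(1,3)])
qed

lemma I_complete_sublattice_small_support:
  fixes I :: "'i set" and J :: "'j set"
  assumes "infinite I"
  shows "I_complete_sublattice I (two_pow J) (two_pow_le J)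
    (small_support I J :: ('j \<Rightarrow> 'a set) set)"
  unfolding I_complete_sublattice_def
proof (intro conjI ballI allI impI small_support_subset)
  have "|support J (\<lambda>j\<in>J. {})| \<le>o |I|"
    by (simp add: support_def card_of_empty)
  then have "(\<lambda>j\<in>J. {}) \<in> small_support I J"
    by (simp add: small_support_def)
  then show "small_support I J \<noteq> {}" by blast
next
  fix x y :: "'j \<Rightarrow> 'a set" and m
  assume "x \<in> small_support I J" "y \<in> small_support I J"
    and m: "is_inf (two_pow J) (two_pow_le J) {x, y} m \<or> is_sup (two_pow J) (two_pow_le J) {x, y} m"
  moreover have "|{x, y}| \<le>o |I|"
    using \<open>infinite I\<close> by (simp add: finite_card_of_ordLeq_infinite)
  ultimately show "m \<in> small_support I J"
    by (intro is_inf_or_sup_in_small_support[OF assms _ _ _ m]) simp_all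
next
  fix x :: "'i \<Rightarrow> 'j \<Rightarrow> 'a set" and m
  assume "x ` I \<subseteq> small_support I J"
    and m: "is_inf (two_pow J) (two_pow_le J) (x ` I) m \<or> is_sup (two_pow J) (two_pow_le J) (x ` I) m"
  moreover have "x ` I \<noteq> {}"
    using \<open>infinite I\<close> by auto
  ultimately show "m \<in> small_support I J"
    using card_of_image[of x I] by (intro is_inf_or_sup_in_small_support[OF assms _ _ _ m])
qed

lemma two_pow_ne_small_support:
  fixes I :: "'i set" and J :: "'j set"
  assumes "|I| <o |J|"
  shows "(two_pow J :: ('j \<Rightarrow> 'a set) set) \<noteq> small_support I J"
proof -
  have "(\<lambda>j\<in>J. UNIV) \<in> (two_pow J :: ('j \<Rightarrow> 'a set) set)"
    by simp
  moreover have "support J (\<lambda>j\<in>J. UNIV :: 'a set) = J"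
    by (auto simp: support_def)
  then have "(\<lambda>j\<in>J. UNIV :: 'a set) \<notin> small_support I J"
    using assms not_ordLess_ordLeq by (auto simp: small_support_def)
  ultimately show ?thesis by blast
qed

lemma pair_image_small_support:
  fixes I :: "'i set" and J :: "'j set"
  assumes "infinite I" and "k \<in> J" "l \<in> J"
  shows "(\<lambda>f. (f k, f l)) ` (two_pow J :: ('j \<Rightarrow> 'a set) set) =
    (\<lambda>f. (f k, f l)) ` small_support I J" (is "?P = ?S")
proof
  show "?P \<subseteq> ?S"
  proof (rule image_subsetI)
    fix f :: "'j \<Rightarrow> 'a set"
    assume f: "f \<in> two_pow J"
    define g where "g = (\<lambda>j\<in>J. if j = k \<or> j = l then f j else {})"
    have "g \<in> two_pow J"
      using f by (auto simp: g_def PiE_iff)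
    moreover have "support J g \<subseteq> {k, l}"
      by (auto simp: g_def support_def)
    then have "|support J g| \<le>o |I|"
      using \<open>infinite I\<close> card_of_mono1 finite_card_of_ordLeq_infinite[of "{k, l}" I]
        ordLeq_transitive by blast
    ultimately have "g \<in> small_support I J"
      by (simp add: small_support_def)
    moreover have "(f k, f l) = (g k, g l)"
      using assms by (simp add: g_def)
    ultimately show "(f k, f l) \<in> ?S"
      by (rule rev_image_eqI[where f = "\<lambda>f. (f k, f l)"])
  qed
next
  show "?S \<subseteq> ?P"
    using small_support_subset by (rule image_mono)
qed

theorem proposition4p11:
  fixes I :: "'i set" and J :: "'j set"
  assumes "infinite I" and "infinite J"
    and "(card_of I, card_of J) \<in> ordLess"
  shows "\<exists>(C :: 'j \<Rightarrow> 'j set set) (R :: 'j \<Rightarrow> 'j set \<Rightarrow> 'j set \<Rightarrow> bool) S T.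
           (\<forall>j\<in>J. I_complete_lattice I (C j) (R j)) \<and>
           I_complete_sublattice I (prod_carrier J C) (prod_le J R) S \<and>
           I_complete_sublattice I (prod_carrier J C) (prod_le J R) T \<and>
           S \<noteq> T \<and>
           (\<forall>k\<in>J. \<forall>l\<in>J. k \<noteq> l \<longrightarrow>
              (\<lambda>f. (f k, f l)) ` S = (\<lambda>f. (f k, f l)) ` T)"
proof -
  let ?C = "\<lambda>_. {{}, UNIV} :: 'j set set" and ?R = "\<lambda>_. (\<subseteq>) :: 'j set \<Rightarrow> 'j set \<Rightarrow> bool"
  let ?T = "small_support I J :: ('j \<Rightarrow> 'j set) set"
  have "two_pow J \<noteq> ({} :: ('j \<Rightarrow> 'j set) set)"
    by (simp add: PiE_eq_empty_iff)
  then have full: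
    "I_complete_sublattice I (two_pow J) (two_pow_le J) (two_pow J :: ('j \<Rightarrow> 'j set) set)"
    by (rule I_complete_sublattice_carrier)
  have small: "I_complete_sublattice I (two_pow J) (two_pow_le J) ?T"
    using assms(1) by (rule I_complete_sublattice_small_support)
  have distinct: "two_pow J \<noteq> ?T"
    using assms(3) by (rule two_pow_ne_small_support)
  have pairs: "(\<lambda>f. (f k, f l)) ` two_pow J = (\<lambda>f. (f k, f l)) ` ?T" if "k \<in> J" "l \<in> J" for k l
    using assms(1) that by (rule pair_image_small_support)
  show ?thesis
    unfolding prod_carrier_def
    by (intro exI[of _ ?C] exI[of _ ?R] exI[of _ "two_pow J"] exI[of _ ?T] conjI ballI impI
        I_complete_lattice_two full small distinct pairs)
qed

end
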